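(* Let $f$ be a planar discrete curve and $c\in\mathcal{P}^\pm$ a circle congruence along $f$ lying in a linear complex $\overline{\mathfrak{m}}$, i.e. $\langle\mathfrak{c}_i,\overline{\mathfrak{m}}\rangle=0$ for all $i$. Then the M-inversions $\sigma_{r_{ij}}$ in $$\mathfrak{r}_{ij}:=\mathfrak{c}_i\langle\mathfrak{c}_j,\mathfrak{p}\rangle-\mathfrak{c}_j\langle\mathfrak{c}_i,\mathfrak{p}\rangle$$ form an $(\overline{\mathfrak{m}})$-type Darboux evolution map for $f$ if and only if there exists a tangential circle congruence $t:\mathcal{E}\to\mathbb{P}(\mathcal{L})$, i.e. circles $t_{ij}$ with $\mathfrak{t}_{ij}\perp\mathfrak{f}_i,\mathfrak{f}_j,\mathfrak{c}_i,\mathfrak{c}_j$ for every edge $(ij)$.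
   Context: Planar light cone model: $\mathbb{R}^{3,2}$ with form of signature $(3,2)$, light cone $\mathcal{L}$; fixed $\mathfrak{p}$ with $\langle\mathfrak{p},\mathfrak{p}\rangle=-1$; $v$ with $\langle\mathfrak{v},\mathfrak{p}\rangle=0$ are points of $\mathbb{R}^2\cup\{\infty\}$, others oriented circles/lines; oriented contact = orthogonality. Inversion in $\mathfrak{a}$: $\sigma_a(x)=x-\frac{2\langle x,\mathfrak{a}\rangle}{\langle\mathfrak{a},\mathfrak{a}\rangle}\mathfrak{a}$; M-inversion if $\mathfrak{a}\perp\mathfrak{p}$. A discrete curve $f:\mathcal{V}\to\mathbb{P}(\mathcal{L})$ maps consecutive integers to points; $\mathcal{E}$ its edges. $\mathcal{P}^\pm_i:=\{\mathfrak{f}_{i-1},\mathfrak{f}_{i+1}\}^\perp\cap\mathcal{L}$ (circles through $f_{i-1},f_{i+1}$); a circle congruence $c\in\mathcal{P}^\pm$ chooses $c_i$ in this pencil at each vertex. An evolution map of $f$ assigns to each edge $(ij)$ an M-inversion $\sigma_{ij}$ with $\sigma_{ij}(f_i)=f_j$; it is of $(\mathfrak{m})$-type if all elements of the 2-dimensional space $\mathrm{span}\{\mathfrak{m},\mathfrak{p}\}$ are fixed by all $\sigma_{ij}$. It is an $(\mathfrak{m})$-type Darboux evolution map if moreover it evolves a circle congruence $c\in\mathcal{P}^\pm$: $\sigma_{ij}(\mathfrak{c}_i)=\mathfrak{c}_j$ for representatives with $\langle\mathfrak{c}_i,\mathfrak{p}\rangle=\langle\mathfrak{c}_j,\mathfrak{p}\rangle=-1$.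 *)

theory Defs
  imports "HOL-Analysis.Analysis"
begin

text \<open>The space R^{3,2}: real^5 with the symmetric bilinear form of signature (3,2).\<close>
type_synonym R32 = "real^5"

definition lf :: "R32 \<Rightarrow> R32 \<Rightarrow> real" where
  "lf x y = x$1*y$1 + x$2*y$2 + x$3*y$3 - x$4*y$4 - x$5*y$5"

text \<open>Homogeneous representative of a point of P(L): a nonzero null vector.\<close>
definition in_light_cone :: "R32 \<Rightarrow> bool" where
  "in_light_cone x \<longleftrightarrow> x \<noteq> 0 \<and> lf x x = 0"

definition proj_eq :: "R32 \<Rightarrow> R32 \<Rightarrow> bool" where
  "proj_eq x y \<longleftrightarrow> (\<exists>l. l \<noteq> 0 \<and> x = l *\<^sub>R y)"

definition inversion :: "R32 \<Rightarrow> R32 \<Rightarrow> R32" where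
  "inversion a x = x - (2 * lf x a / lf a a) *\<^sub>R a"

definition is_M_inversion :: "R32 \<Rightarrow> (R32 \<Rightarrow> R32) \<Rightarrow> bool" where
  "is_M_inversion p s \<longleftrightarrow> (\<exists>a. lf a p = 0 \<and> lf a a \<noteq> 0 \<and> s = inversion a)"

text \<open>Planar discrete curve on the vertex set of all integers: each f i represents a point
  of the plane (null and orthogonal to p). Edges are (i, i+1).\<close>
definition discrete_curve :: "R32 \<Rightarrow> (int \<Rightarrow> R32) \<Rightarrow> bool" where
  "discrete_curve p f \<longleftrightarrow> (\<forall>i. in_light_cone (f i) \<and> lf (f i) p = 0)"

text \<open>Circle congruence c in P^{+-}: c i lies in {f(i-1), f(i+1)}^perp intersected with L.\<close>
definition circle_congr_P :: "(int \<Rightarrow> R32) \<Rightarrow> (int \<Rightarrow> R32) \<Rightarrow> bool" where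
  "circle_congr_P f c \<longleftrightarrow>
     (\<forall>i. in_light_cone (c i) \<and> lf (c i) (f (i - 1)) = 0 \<and> lf (c i) (f (i + 1)) = 0)"

text \<open>Evolution map: sigma i is the M-inversion attached to the edge (i, i+1),
  mapping the point f i to the point f (i+1).\<close>
definition evolution_map :: "R32 \<Rightarrow> (int \<Rightarrow> R32) \<Rightarrow> (int \<Rightarrow> R32 \<Rightarrow> R32) \<Rightarrow> bool" where
  "evolution_map p f \<sigma> \<longleftrightarrow>
     (\<forall>i. is_M_inversion p (\<sigma> i) \<and> proj_eq (\<sigma> i (f i)) (f (i + 1)))"

definition m_type :: "R32 \<Rightarrow> R32 \<Rightarrow> (int \<Rightarrow> R32 \<Rightarrow> R32) \<Rightarrow> bool" where
  "m_type p m \<sigma> \<longleftrightarrow> (\<forall>i. \<forall>x \<in> span {m, p}. \<sigma> i x = x)"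

definition m_type_darboux_evolution_map ::
  "R32 \<Rightarrow> R32 \<Rightarrow> (int \<Rightarrow> R32) \<Rightarrow> (int \<Rightarrow> R32) \<Rightarrow> (int \<Rightarrow> R32 \<Rightarrow> R32) \<Rightarrow> bool" where
  "m_type_darboux_evolution_map p m f c \<sigma> \<longleftrightarrow>
     evolution_map p f \<sigma> \<and> m_type p m \<sigma> \<and> circle_congr_P f c \<and>
     (\<forall>i ci cj. proj_eq ci (c i) \<and> proj_eq cj (c (i + 1)) \<and> lf ci p = -1 \<and> lf cj p = -1
        \<longrightarrow> \<sigma> i ci = cj)"

definition r_vec :: "R32 \<Rightarrow> (int \<Rightarrow> R32) \<Rightarrow> int \<Rightarrow> R32" where
  "r_vec p c i = lf (c (i + 1)) p *\<^sub>R c i - lf (c i) p *\<^sub>R c (i + 1)"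

text \<open>Tangential circle congruence t : E -> P(L), t i for the edge (i, i+1).\<close>
definition tangential_congr :: "(int \<Rightarrow> R32) \<Rightarrow> (int \<Rightarrow> R32) \<Rightarrow> (int \<Rightarrow> R32) \<Rightarrow> bool" where
  "tangential_congr f c t \<longleftrightarrow>
     (\<forall>i. in_light_cone (t i) \<and> lf (t i) (f i) = 0 \<and> lf (t i) (f (i + 1)) = 0
          \<and> lf (t i) (c i) = 0 \<and> lf (t i) (c (i + 1)) = 0)"

end

theory Submission
  imports Defs
begin

(* Write P = <c_i,p> and Q = <c_j,p> for an edge (ij). The vector r = Q c_i - P c_j is
   orthogonal to p and to mbar, so the inversion in r is an M-inversion of (mbar)-type, and it
   maps c_i to (P/Q) c_j, which is exactly the Darboux condition on the representatives
   normalised by <c,p> = -1. Everything thus reduces to the edge condition sigma_r(f_i) ~ f_j.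
   Removing from f_i its component along c_j leaves a null vector w orthogonal to f_i, c_i
   and c_j; being orthogonal to r it is fixed by sigma_r, hence also orthogonal to
   sigma_r(f_i), and is the tangent circle when sigma_r(f_i) ~ f_j. Conversely, a totally
   null subspace of R^{3,2} has dimension at most 2, so a tangent circle t forces w to be a
   multiple of t; then sigma_r(f_i) and f_j both lie in span {t, c_i} and are orthogonal to p,
   which determines a single point. *)

lemma exhaust_5:
  fixes x :: 5
  shows "x = 1 \<or> x = 2 \<or> x = 3 \<or> x = 4 \<or> x = 5"
proof (induct x)
  case (of_int z)
  then have "z = 0 \<or> z = 1 \<or> z = 2 \<or> z = 3 \<or> z = 4" by fastforce
  then show ?case by auto
qed

lemma forall_5: "(\<forall>i::5. P i) \<longleftrightarrow> P 1 \<and> P 2 \<and> P 3 \<and> P 4 \<and> P 5"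
  by (metis exhaust_5)

lemma lf_commute: "lf x y = lf y x"
  by (simp add: lf_def algebra_simps)

lemma lf_add_left [simp]: "lf (x + y) z = lf x z + lf y z"
  and lf_add_right [simp]: "lf z (x + y) = lf z x + lf z y"
  and lf_diff_left [simp]: "lf (x - y) z = lf x z - lf y z"
  and lf_diff_right [simp]: "lf z (x - y) = lf z x - lf z y"
  and lf_scaleR_left [simp]: "lf (a *\<^sub>R x) z = a * lf x z"
  and lf_scaleR_right [simp]: "lf z (a *\<^sub>R x) = a * lf z x"
  and lf_minus_left [simp]: "lf (- x) z = - lf x z"
  and lf_minus_right [simp]: "lf z (- x) = - lf z x"
  and lf_zero_left [simp]: "lf 0 z = 0"
  and lf_zero_right [simp]: "lf z 0 = 0"
  by (simp_all add: lf_def algebra_simps)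

lemma lf_subspace_orthogonal: "subspace {x. lf x a = 0}"
  unfolding subspace_def by simp

lemma null_eq_0_if_timelike_part_0:
  assumes "lf u u = 0" "u$4 = 0" "u$5 = 0"
  shows "u = 0"
proof -
  have "u$1^2 + u$2^2 + u$3^2 = 0"
    using assms by (simp add: lf_def power2_eq_square)
  then have "u$1 = 0" "u$2 = 0" "u$3 = 0"
    by (smt (verit) zero_le_power2 power_zero_numeral zero_less_power2)+
  then show ?thesis
    using assms(2,3) by (simp add: vec_eq_iff forall_5)
qed

lemma linear_nontrivial_kernel:
  fixes h :: "'a::euclidean_space \<Rightarrow> 'b::euclidean_space"
  assumes "linear h" "DIM('b) < DIM('a)"
  obtains v where "v \<noteq> 0" "h v = 0"
proof -
  have "\<not> inj h"
  proof
    assume "inj h"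
    then have "dim (range h) = DIM('a)"
      using dim_image_eq[OF assms(1), of UNIV] by (simp add: inj_on_def)
    then show False
      using dim_subset_UNIV[of "range h"] assms(2) by simp
  qed
  then show ?thesis
    using that linear_injective_0[OF assms(1)] by auto
qed

(* Projecting to the two negative coordinates is injective on a totally null subspace. *)
lemma null_orthogonal_triple_dependent:
  assumes "lf x x = 0" "lf y y = 0" "lf z z = 0" "lf x y = 0" "lf x z = 0" "lf y z = 0"
  obtains \<alpha> \<beta> \<gamma> where "(\<alpha>, \<beta>, \<gamma>) \<noteq> (0, 0, 0)" "\<alpha> *\<^sub>R x + \<beta> *\<^sub>R y + \<gamma> *\<^sub>R z = 0"
proof -
  define g where "g v = v$1 *\<^sub>R x + v$2 *\<^sub>R y + v$3 *\<^sub>R z" for v :: "real^3"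
  define h where "h v = (\<chi> k::2. if k = 1 then g v $ 4 else g v $ 5)" for v
  have "linear h"
    unfolding h_def g_def by (auto intro!: linearI simp: vec_eq_iff algebra_simps)
  moreover have "DIM(real^2) < DIM(real^3)"
    by simp
  ultimately obtain v where v: "v \<noteq> 0" "h v = 0"
    by (rule linear_nontrivial_kernel)
  have "h v $ 1 = g v $ 4" "h v $ 2 = g v $ 5"
    by (simp_all add: h_def)
  then have "g v $ 4 = 0" "g v $ 5 = 0"
    using v(2) by simp_all
  moreover have "lf (g v) (g v) = 0"
    unfolding g_def using assms by (simp add: lf_commute[of y x] lf_commute[of z x] lf_commute[of z y])
  ultimately have "g v = 0"
    by (rule null_eq_0_if_timelike_part_0[rotated])
  moreover have "(v$1, v$2, v$3) \<noteq> (0, 0, 0)"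
    using v(1) by (auto simp: vec_eq_iff forall_3)
  ultimately show ?thesis
    using that unfolding g_def by blast
qed

lemma null_orthogonal_collinear:
  assumes "t \<noteq> 0" "lf t t = 0" "lf w w = 0" "lf t w = 0"
    and "lf a a = 0" "lf t a = 0" "lf w a = 0"
    and "lf t b = 0" "lf w b = 0" "lf a b \<noteq> 0"
  obtains l where "w = l *\<^sub>R t"
proof -
  obtain \<alpha> \<beta> \<gamma> where nontrivial: "(\<alpha>, \<beta>, \<gamma>) \<noteq> (0, 0, 0)"
    and rel: "\<alpha> *\<^sub>R t + \<beta> *\<^sub>R w + \<gamma> *\<^sub>R a = 0"
    using null_orthogonal_triple_dependent[of t w a] assms(2-7) by auto
  have "lf (\<alpha> *\<^sub>R t + \<beta> *\<^sub>R w + \<gamma> *\<^sub>R a) b = 0"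
    using rel by simp
  then have "\<gamma> = 0"
    using assms(8-10) by simp
  with rel have rel': "\<alpha> *\<^sub>R t + \<beta> *\<^sub>R w = 0"
    by simp
  have "\<beta> \<noteq> 0"
    using rel' nontrivial \<open>\<gamma> = 0\<close> assms(1) by auto
  moreover have "\<beta> *\<^sub>R w = (- \<alpha>) *\<^sub>R t"
    using rel' by (simp add: eq_neg_iff_add_eq_0 add.commute)
  ultimately have "w = (- \<alpha> / \<beta>) *\<^sub>R t"
    by (metis divide_inverse_commute scaleR_scaleR scaleR_one left_inverse)
  then show ?thesis
    using that by blast
qed

lemma inversion_add [simp]: "inversion a (x + y) = inversion a x + inversion a y"
  and inversion_scaleR [simp]: "inversion a (k *\<^sub>R x) = k *\<^sub>R inversion a x"
  unfolding inversion_def by (simp_all add: algebra_simps add_divide_distrib)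

lemma inversion_uminus_center: "inversion (- a) = inversion a"
  unfolding inversion_def by auto

lemma inversion_fixes: "lf x a = 0 \<Longrightarrow> inversion a x = x"
  unfolding inversion_def by simp

lemma inversion_fixes_span:
  assumes "\<forall>y\<in>S. lf y a = 0" "x \<in> span S"
  shows "inversion a x = x"
proof -
  have "lf x a = 0"
    using span_induct[OF assms(2) lf_subspace_orthogonal] assms(1) by blast
  then show ?thesis
    by (rule inversion_fixes)
qed

lemma lf_inversion:
  assumes "lf a a \<noteq> 0"
  shows "lf (inversion a x) (inversion a y) = lf x y"
  unfolding inversion_def using assms by (simp add: lf_commute[of a y] field_simps)

lemma lf_inversion_center: "lf a a \<noteq> 0 \<Longrightarrow> lf (inversion a x) a = - lf x a"
  unfolding inversion_def by simp

lemma inversion_inversion: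
  assumes "lf a a \<noteq> 0"
  shows "inversion a (inversion a x) = x"
  unfolding inversion_def[of a "inversion a x"] lf_inversion_center[OF assms]
  by (simp add: inversion_def)

lemma lf_null_combination:
  assumes "lf x x = 0" "lf y y = 0"
  shows "lf (\<alpha> *\<^sub>R x - \<beta> *\<^sub>R y) (\<alpha> *\<^sub>R x - \<beta> *\<^sub>R y) = - 2 * \<alpha> * \<beta> * lf x y"
  using assms by (simp add: lf_commute[of y x] algebra_simps)

lemma inversion_swaps_null:
  assumes "lf x x = 0" "lf y y = 0" "lf x y \<noteq> 0" "\<alpha> \<noteq> 0" "\<beta> \<noteq> 0"
  shows "inversion (\<alpha> *\<^sub>R x - \<beta> *\<^sub>R y) x = (\<beta> / \<alpha>) *\<^sub>R y"
proof -
  have "inversion (\<alpha> *\<^sub>R x - \<beta> *\<^sub>R y) x = x - (1 / \<alpha>) *\<^sub>R (\<alpha> *\<^sub>R x - \<beta> *\<^sub>R y)"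
    unfolding inversion_def lf_null_combination[OF assms(1,2)] using assms by simp
  also have "\<dots> = (\<beta> / \<alpha>) *\<^sub>R y"
    using assms(4) by (simp add: scaleR_diff_right)
  finally show ?thesis .
qed

lemma tangent_part:
  assumes "lf F F = 0" "lf a a = 0" "lf F a = 0" "lf a b \<noteq> 0"
  defines "w \<equiv> F - (lf F b / lf a b) *\<^sub>R a"
  shows "lf w w = 0" "lf w F = 0" "lf w a = 0" "lf w b = 0"
  unfolding w_def using assms(1-4) by (simp_all add: lf_commute[of a F])

lemma proj_eq_if_orthogonal_in_pencil:
  assumes "lf c p \<noteq> 0"
    and "x = a *\<^sub>R t + b *\<^sub>R c" "y = a' *\<^sub>R t + b' *\<^sub>R c"
    and "lf x p = 0" "lf y p = 0" "x \<noteq> 0" "y \<noteq> 0"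
  shows "proj_eq x y"
proof -
  define u where "u = t - (lf t p / lf c p) *\<^sub>R c"
  have "b = - a * lf t p / lf c p" "b' = - a' * lf t p / lf c p"
    using assms(1-5) by (simp_all add: field_simps)
  then have "x = a *\<^sub>R u" "y = a' *\<^sub>R u"
    unfolding u_def assms(2,3) by (simp_all add: algebra_simps)
  with assms(6,7) have "x = (a / a') *\<^sub>R y" "a / a' \<noteq> 0"
    by auto
  then show ?thesis
    unfolding proj_eq_def by blast
qed

locale darboux_edge =
  fixes p ci cj F G :: R32
  assumes F_cone: "in_light_cone F" and G_cone: "in_light_cone G"
    and F_p: "lf F p = 0" and G_p: "lf G p = 0"
    and ci_null: "lf ci ci = 0" and cj_null: "lf cj cj = 0"
    and F_cj: "lf F cj = 0" and G_ci: "lf G ci = 0"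
    and ci_p: "lf ci p \<noteq> 0" and cj_p: "lf cj p \<noteq> 0" and ci_cj: "lf ci cj \<noteq> 0"
begin

definition r :: R32 where
  "r = lf cj p *\<^sub>R ci - lf ci p *\<^sub>R cj"

lemma lf_r_r: "lf r r \<noteq> 0"
  unfolding r_def lf_null_combination[OF ci_null cj_null] using ci_p cj_p ci_cj by simp

lemma inversion_r_fixes: "lf x ci = 0 \<Longrightarrow> lf x cj = 0 \<Longrightarrow> inversion r x = x"
  unfolding r_def by (rule inversion_fixes) simp

lemma inversion_r_p: "inversion r p = p"
  by (rule inversion_fixes) (simp add: r_def lf_commute[of p ci] lf_commute[of p cj])

lemma inversion_r_cj: "inversion r cj = (lf cj p / lf ci p) *\<^sub>R ci"
proof -
  have "inversion r cj = inversion (lf ci p *\<^sub>R cj - lf cj p *\<^sub>R ci) cj"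
    unfolding r_def by (metis inversion_uminus_center minus_diff_eq)
  also have "\<dots> = (lf cj p / lf ci p) *\<^sub>R ci"
    using ci_p cj_p ci_cj
    by (intro inversion_swaps_null[OF cj_null ci_null]) (auto simp: lf_commute[of cj ci])
  finally show ?thesis .
qed

definition F_tangent :: R32 where
  "F_tangent = F - (lf F ci / lf ci cj) *\<^sub>R cj"

definition G_tangent :: R32 where
  "G_tangent = G - (lf G cj / lf ci cj) *\<^sub>R ci"

lemma F_tangent_orthogonal:
  "lf F_tangent F_tangent = 0" "lf F_tangent F = 0" "lf F_tangent ci = 0" "lf F_tangent cj = 0"
  using tangent_part[of F cj ci] F_cone F_cj cj_null ci_cj
  unfolding F_tangent_def in_light_cone_def by (simp_all add: lf_commute[of cj ci])

lemma G_tangent_orthogonal: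
  "lf G_tangent G_tangent = 0" "lf G_tangent G = 0" "lf G_tangent ci = 0" "lf G_tangent cj = 0"
  using tangent_part[of G ci cj] G_cone G_ci ci_null ci_cj
  unfolding G_tangent_def in_light_cone_def by simp_all

lemma F_tangent_nonzero: "F_tangent \<noteq> 0"
proof
  assume "F_tangent = 0"
  then have "F = (lf F ci / lf ci cj) *\<^sub>R cj"
    unfolding F_tangent_def by simp
  moreover from this have "lf F ci = 0"
    using F_p cj_p ci_cj by (metis divide_eq_0_iff lf_scaleR_left mult_eq_0_iff)
  ultimately show False
    using F_cone unfolding in_light_cone_def by simp
qed

lemma tangent_circle_if_evolves:
  assumes "proj_eq (inversion r F) G"
  shows "\<exists>t. in_light_cone t \<and> lf t F = 0 \<and> lf t G = 0 \<and> lf t ci = 0 \<and> lf t cj = 0"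
proof -
  obtain k where "k \<noteq> 0" "inversion r F = k *\<^sub>R G"
    using assms unfolding proj_eq_def by blast
  moreover have "lf (inversion r F_tangent) (inversion r F) = 0"
    using lf_inversion[OF lf_r_r] F_tangent_orthogonal(2) by simp
  ultimately have "lf F_tangent G = 0"
    using inversion_r_fixes[OF F_tangent_orthogonal(3,4)] by simp
  then show ?thesis
    using F_tangent_nonzero F_tangent_orthogonal unfolding in_light_cone_def by blast
qed

lemma evolves_if_tangent_circle:
  assumes t: "in_light_cone t" "lf t F = 0" "lf t G = 0" "lf t ci = 0" "lf t cj = 0"
  shows "proj_eq (inversion r F) G"
proof -
  have t_null: "t \<noteq> 0" "lf t t = 0"
    using t(1) unfolding in_light_cone_def by auto
  have "lf t F_tangent = 0" "lf t G_tangent = 0"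
    using t unfolding F_tangent_def G_tangent_def by simp_all
  then obtain l l' where l: "F_tangent = l *\<^sub>R t" and l': "G_tangent = l' *\<^sub>R t"
    using null_orthogonal_collinear[OF t_null, of F_tangent ci cj]
      null_orthogonal_collinear[OF t_null, of G_tangent cj ci]
      t ci_null cj_null ci_cj F_tangent_orthogonal G_tangent_orthogonal
    by (metis lf_commute)
  define \<mu> where "\<mu> = lf F ci / lf ci cj"
  have "inversion r F = inversion r (l *\<^sub>R t + \<mu> *\<^sub>R cj)"
    using l unfolding F_tangent_def \<mu>_def by (simp add: algebra_simps)
  also have "\<dots> = l *\<^sub>R t + (\<mu> * lf cj p / lf ci p) *\<^sub>R ci"
    using inversion_r_fixes[OF t(4,5)] by (simp add: inversion_r_cj)
  finally have F_image: "inversion r F = l *\<^sub>R t + (\<mu> * lf cj p / lf ci p) *\<^sub>R ci" .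
  have G_eq: "G = l' *\<^sub>R t + (lf G cj / lf ci cj) *\<^sub>R ci"
    using l' unfolding G_tangent_def by (simp add: algebra_simps)
  have "lf (inversion r F) p = 0"
    using lf_inversion[OF lf_r_r, of F p] F_p by (simp add: inversion_r_p)
  moreover have "inversion r F \<noteq> 0"
    using inversion_inversion[OF lf_r_r, of F] inversion_fixes[of 0 r] F_cone
    unfolding in_light_cone_def by auto
  ultimately show ?thesis
    using proj_eq_if_orthogonal_in_pencil[OF ci_p F_image G_eq] G_p G_cone
    unfolding in_light_cone_def by blast
qed

lemma evolves_iff_tangent_circle:
  "proj_eq (inversion r F) G \<longleftrightarrow>
     (\<exists>t. in_light_cone t \<and> lf t F = 0 \<and> lf t G = 0 \<and> lf t ci = 0 \<and> lf t cj = 0)"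
  using tangent_circle_if_evolves evolves_if_tangent_circle by blast

end

lemma lf_r_vec_self:
  assumes "circle_congr_P f c"
  shows "lf (r_vec p c i) (r_vec p c i) = - 2 * lf (c (i + 1)) p * lf (c i) p * lf (c i) (c (i + 1))"
  using assms unfolding r_vec_def circle_congr_P_def in_light_cone_def
  by (simp add: lf_null_combination lf_commute[of "c (i + 1)" "c i"])

lemma lf_r_vec_p: "lf (r_vec p c i) p = 0"
  unfolding r_vec_def by simp

lemma is_M_inversion_r_vec:
  assumes "lf (r_vec p c i) (r_vec p c i) \<noteq> 0"
  shows "is_M_inversion p (inversion (r_vec p c i))"
  unfolding is_M_inversion_def using assms
  by (intro exI[of _ "r_vec p c i"]) (simp add: lf_r_vec_p)

lemma m_type_r_vec:
  assumes "\<forall>i. lf (c i) m = 0"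
  shows "m_type p m (\<lambda>i. inversion (r_vec p c i))"
  unfolding m_type_def
proof (intro allI ballI)
  fix i x
  assume x: "x \<in> span {m, p}"
  have "lf (r_vec p c i) m = 0"
    using assms unfolding r_vec_def by simp
  then have "\<forall>y\<in>{m, p}. lf y (r_vec p c i) = 0"
    using lf_r_vec_p[of p c i] by (simp add: lf_commute[of m "r_vec p c i"] lf_commute[of p "r_vec p c i"])
  then show "inversion (r_vec p c i) x = x"
    using x by (rule inversion_fixes_span)
qed

lemma inversion_r_vec_normalized:
  assumes c: "circle_congr_P f c" and r: "lf (r_vec p c i) (r_vec p c i) \<noteq> 0"
    and "proj_eq ci (c i)" "proj_eq cj (c (i + 1))" "lf ci p = -1" "lf cj p = -1"
  shows "inversion (r_vec p c i) ci = cj"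
proof -
  obtain k k' where k: "ci = k *\<^sub>R c i" "cj = k' *\<^sub>R c (i + 1)"
    using assms(3,4) unfolding proj_eq_def by blast
  have nonzero: "lf (c i) p \<noteq> 0" "lf (c (i + 1)) p \<noteq> 0" "lf (c i) (c (i + 1)) \<noteq> 0"
    using r lf_r_vec_self[OF c] by auto
  have "inversion (r_vec p c i) (c i) = (lf (c i) p / lf (c (i + 1)) p) *\<^sub>R c (i + 1)"
    unfolding r_vec_def using c nonzero unfolding circle_congr_P_def in_light_cone_def
    by (intro inversion_swaps_null) auto
  moreover have "k * (lf (c i) p / lf (c (i + 1)) p) = k'"
    using assms(5,6) nonzero unfolding k by (simp add: field_simps)
  ultimately show ?thesis
    unfolding k by simp
qed

lemma darboux_evolution_iff_evolution:
  assumes "circle_congr_P f c" "\<forall>i. lf (c i) m = 0" "\<forall>i. lf (r_vec p c i) (r_vec p c i) \<noteq> 0"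
  shows "m_type_darboux_evolution_map p m f c (\<lambda>i. inversion (r_vec p c i))
    \<longleftrightarrow> (\<forall>i. proj_eq (inversion (r_vec p c i) (f i)) (f (i + 1)))"
  unfolding m_type_darboux_evolution_map_def evolution_map_def
  using assms is_M_inversion_r_vec m_type_r_vec inversion_r_vec_normalized by blast

theorem lemma3p7:
  fixes p mbar :: R32 and f c :: "int \<Rightarrow> R32"
  assumes "lf p p = -1"
    and "discrete_curve p f"
    and "circle_congr_P f c"
    and "\<forall>i. lf (c i) mbar = 0"
    and "\<forall>i. lf (c i) p \<noteq> 0"
    and "\<forall>i. lf (r_vec p c i) (r_vec p c i) \<noteq> 0"
  shows "m_type_darboux_evolution_map p mbar f c (\<lambda>i. inversion (r_vec p c i))
         \<longleftrightarrow> (\<exists>t. tangential_congr f c t)"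
proof -
  have edge: "proj_eq (inversion (r_vec p c i) (f i)) (f (i + 1)) \<longleftrightarrow>
    (\<exists>t. in_light_cone t \<and> lf t (f i) = 0 \<and> lf t (f (i + 1)) = 0
       \<and> lf t (c i) = 0 \<and> lf t (c (i + 1)) = 0)" for i
  proof -
    have "lf (c (i + 1)) (f (i + 1 - 1)) = 0"
      using assms(3) unfolding circle_congr_P_def by blast
    then interpret darboux_edge p "c i" "c (i + 1)" "f i" "f (i + 1)"
      using assms(2,3,5) assms(6)[rule_format, of i] lf_r_vec_self[OF assms(3), of p i]
      unfolding discrete_curve_def circle_congr_P_def
      by unfold_locales (auto simp: in_light_cone_def lf_commute[of "f i"] lf_commute[of "f (i + 1)"])
    show ?thesis
      using evolves_iff_tangent_circle unfolding r_def r_vec_def .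
  qed
  have "(\<exists>t. tangential_congr f c t) \<longleftrightarrow>
    (\<forall>i. \<exists>t. in_light_cone t \<and> lf t (f i) = 0 \<and> lf t (f (i + 1)) = 0
       \<and> lf t (c i) = 0 \<and> lf t (c (i + 1)) = 0)"
    unfolding tangential_congr_def by metis
  then show ?thesis
    using darboux_evolution_iff_evolution[OF assms(3,4,6)] edge by simp
qed

end
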